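(* Let $\alpha>0$ and $\beta\le\alpha$. Then the Sharma-Mittal entropy $S_{\alpha,\beta}$ is supermodular on the majorization lattice: for all $\mathbf{p},\mathbf{q}\in\mathcal{P}_n$, $$S_{\alpha,\beta}(\mathbf{p})+S_{\alpha,\beta}(\mathbf{q})\le S_{\alpha,\beta}(\mathbf{p}\wedge\mathbf{q})+S_{\alpha,\beta}(\mathbf{p}\vee\mathbf{q}).$$
   Context: $\mathcal{P}_n=\{\mathbf{p}=(p_1,\dots,p_n): p_i\ge0,\ \sum_i p_i=1\}$, with all vectors taken with components in non-increasing order. Majorization: $\mathbf{p}\preceq\mathbf{q}$ iff $\sum_{i=1}^k p_i\le\sum_{i=1}^k q_i$ for $k=1,\dots,n$; $(\mathcal{P}_n,\preceq)$ is a lattice. Its greatest lower bound $\mathbf{p}\wedge\mathbf{q}=\mathbf{r}$ satisfies $\sum_{i=1}^k r_i=\min\{\sum_{i=1}^k p_i,\sum_{i=1}^k q_i\}$. Its least upper bound $\mathbf{p}\vee\mathbf{q}$ is the least element of $\mathcal{P}_n$ (w.r.t. $\preceq$) majorizing both; concretely, let $\mathbf{w}$ satisfy $\sum_{i=1}^k w_i=\max\{\sum_{i=1}^k p_i,\sum_{i=1}^k q_i\}$; if $\mathbf{w}$ is non-increasing then $\mathbf{p}\vee\mathbf{q}=\mathbf{w}$, otherwise $\mathbf{p}\vee\mathbf{q}$ is obtained by repeatedly replacing each maximal consecutive block of coordinates violating the non-increasing order by its average until the vector is non-increasing. The Sharma-Mittal entropy is $S_{\alpha,\beta}(\mathbf{p})=\frac{1}{1-\beta}\left[\left(\sum_{i=1}^n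 p_i^\alpha\right)^{\frac{1-\beta}{1-\alpha}}-1\right]$, with values at $\alpha=1$ and/or $\beta=1$ defined by the corresponding limits. *)

theory Defs
  imports Complex_Main
begin

text \<open>Probability vectors of length n are represented as functions nat => real,
  with the relevant coordinates p 0, ..., p (n-1) (0-based indexing).\<close>

definition prob_vec :: "nat \<Rightarrow> (nat \<Rightarrow> real) \<Rightarrow> bool" where
  "prob_vec n p \<longleftrightarrow> (\<forall>i<n. 0 \<le> p i) \<and> (\<Sum>i<n. p i) = 1 \<and>
     (\<forall>i j. i \<le> j \<longrightarrow> j < n \<longrightarrow> p j \<le> p i)"

definition majorized :: "nat \<Rightarrow> (nat \<Rightarrow> real) \<Rightarrow> (nat \<Rightarrow> real) \<Rightarrow> bool" where
  "majorized n p q \<longleftrightarrow> (\<forall>k. 1 \<le> k \<longrightarrow> k \<le> n \<longrightarrow> (\<Sum>i<k. p i) \<le> (\<Sum>i<k. q i))"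

definition pmeet :: "nat \<Rightarrow> (nat \<Rightarrow> real) \<Rightarrow> (nat \<Rightarrow> real) \<Rightarrow> nat \<Rightarrow> real" where
  "pmeet n p q i = (if i < n then
      min (\<Sum>j<Suc i. p j) (\<Sum>j<Suc i. q j) - min (\<Sum>j<i. p j) (\<Sum>j<i. q j) else 0)"

text \<open>Least upper bound: the least element of P_n (w.r.t. majorization) majorizing both
  (coordinates beyond n set to 0 to make it unique).\<close>
definition pjoin :: "nat \<Rightarrow> (nat \<Rightarrow> real) \<Rightarrow> (nat \<Rightarrow> real) \<Rightarrow> nat \<Rightarrow> real" where
  "pjoin n p q = (THE r. prob_vec n r \<and> (\<forall>i\<ge>n. r i = 0) \<and>
      majorized n p r \<and> majorized n q r \<and>
      (\<forall>s. prob_vec n s \<and> majorized n p s \<and> majorized n q s \<longrightarrow> majorized n r s))"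

text \<open>Shannon entropy (natural logarithm; 0 ln 0 = 0 since ln 0 = 0 in Isabelle).\<close>
definition shannon :: "nat \<Rightarrow> (nat \<Rightarrow> real) \<Rightarrow> real" where
  "shannon n p = - (\<Sum>i<n. p i * ln (p i))"

definition sharma_mittal :: "real \<Rightarrow> real \<Rightarrow> nat \<Rightarrow> (nat \<Rightarrow> real) \<Rightarrow> real" where
  "sharma_mittal \<alpha> \<beta> n p =
    (if \<alpha> \<noteq> 1 \<and> \<beta> \<noteq> 1 then
       (1 / (1 - \<beta>)) * ((\<Sum>i<n. p i powr \<alpha>) powr ((1 - \<beta>) / (1 - \<alpha>)) - 1)
     else if \<alpha> = 1 \<and> \<beta> \<noteq> 1 then
       (1 / (1 - \<beta>)) * (exp ((1 - \<beta>) * shannon n p) - 1)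
     else if \<alpha> \<noteq> 1 \<and> \<beta> = 1 then
       (1 / (1 - \<alpha>)) * ln (\<Sum>i<n. p i powr \<alpha>)
     else shannon n p)"

end

theory Submission
  imports Defs "HOL-Analysis.Convex_Euclidean_Space"
begin

(* Every Sharma-Mittal entropy can be written as g (\<Sum>i. \<psi> (p i)) with \<psi> convex on [0, \<infinity>)
   (t powr \<alpha>, - t powr \<alpha> or t ln t) and g convex and non-increasing. Let m and r be the meet and
   the join of p and q, and P, Q the partial sums of p, q. Since p and q are majorized by r,
   Karamata's inequality gives \<Sum>\<psi>(p), \<Sum>\<psi>(q) \<le> \<Sum>\<psi>(r). Moreover
   \<Sum>\<psi>(m) + \<Sum>\<psi>(r) \<le> \<Sum>\<psi>(p) + \<Sum>\<psi>(q): coordinatewise, m i and the increment w i of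
   k \<mapsto> max (P k) (Q k) lie between p i and q i and add up to p i + q i; and the partial sums of r
   form the least concave majorant of max (P k) (Q k), so r majorizes w strictly only along runs
   where r is constant, which forces \<Sum>\<psi>(r) \<le> \<Sum>\<psi>(w). A convex non-increasing g turns these
   inequalities into g (\<Sum>\<psi>(p)) + g (\<Sum>\<psi>(q)) \<le> g (\<Sum>\<psi>(m)) + g (\<Sum>\<psi>(r)). *)

section \<open>Convexity through supporting lines\<close>

(* For t \<in> T the line through (t, f t) of slope d t lies below f on S. Slopes are only required
   on T, so that t ln t and - t powr \<alpha> with \<alpha> < 1 qualify on S = {0..} with T = {0<..}. *)
definition supporting_lines :: "real set \<Rightarrow> real set \<Rightarrow> (real \<Rightarrow> real) \<Rightarrow> (real \<Rightarrow> real) \<Rightarrow> bool" where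
  "supporting_lines T S f d \<longleftrightarrow> (\<forall>t\<in>T. \<forall>x\<in>S. f t + d t * (x - t) \<le> f x)"

lemma supporting_linesI:
  "(\<And>t x. t \<in> T \<Longrightarrow> x \<in> S \<Longrightarrow> f t + d t * (x - t) \<le> f x) \<Longrightarrow> supporting_lines T S f d"
  by (simp add: supporting_lines_def)

lemma supporting_linesD:
  "supporting_lines T S f d \<Longrightarrow> t \<in> T \<Longrightarrow> x \<in> S \<Longrightarrow> f t + d t * (x - t) \<le> f x"
  by (simp add: supporting_lines_def)

lemma supporting_lines_subset:
  "supporting_lines T S f d \<Longrightarrow> T' \<subseteq> T \<Longrightarrow> S' \<subseteq> S \<Longrightarrow> supporting_lines T' S' f d"
  by (auto simp: supporting_lines_def)

lemma supporting_lines_cmult: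
  assumes "supporting_lines T S f d" "0 \<le> k"
  shows "supporting_lines T S (\<lambda>x. k * f x) (\<lambda>t. k * d t)"
proof (rule supporting_linesI)
  fix t x assume "t \<in> T" "x \<in> S"
  then have "k * (f t + d t * (x - t)) \<le> k * f x"
    using assms by (intro mult_left_mono supporting_linesD) auto
  then show "k * f t + k * d t * (x - t) \<le> k * f x"
    by (simp add: algebra_simps)
qed

lemma supporting_lines_add_const:
  "supporting_lines T S f d \<Longrightarrow> supporting_lines T S (\<lambda>x. f x + b) d"
  by (simp add: supporting_lines_def)

lemma supporting_lines_scale:
  assumes "supporting_lines T S f d" "\<And>t. t \<in> T' \<Longrightarrow> a * t \<in> T" "\<And>x. x \<in> S' \<Longrightarrow> a * x \<in> S"
  shows "supporting_lines T' S' (\<lambda>x. f (a * x)) (\<lambda>t. a * d (a * t))"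
proof (rule supporting_linesI)
  fix t x assume "t \<in> T'" "x \<in> S'"
  then have "f (a * t) + d (a * t) * (a * x - a * t) \<le> f (a * x)"
    using assms by (intro supporting_linesD) auto
  then show "f (a * t) + a * d (a * t) * (x - t) \<le> f (a * x)"
    by (simp add: algebra_simps)
qed

lemma supporting_lines_slope_mono:
  assumes "supporting_lines T S f d" "T \<subseteq> S" "s \<in> T" "t \<in> T" "s \<le> t"
  shows "d s \<le> d t"
proof -
  have "f s + d s * (t - s) \<le> f t" "f t + d t * (s - t) \<le> f s"
    using assms by (auto intro: supporting_linesD)
  then have "d s * (t - s) \<le> d t * (t - s)"
    by (simp add: algebra_simps)
  then show ?thesis
    using \<open>s \<le> t\<close> by (cases "s = t") (auto simp: mult_le_cancel_right)
qed

lemma supporting_lines_antimono: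
  assumes "supporting_lines S S f d" "\<And>t. t \<in> S \<Longrightarrow> d t \<le> 0"
  shows "antimono_on S f"
proof (rule monotone_onI)
  fix x y assume "x \<in> S" "y \<in> S" "x \<le> y"
  then have "f y + d y * (x - y) \<le> f x" "0 \<le> d y * (x - y)"
    using assms by (auto intro: supporting_linesD mult_nonpos_nonpos)
  then show "f y \<le> f x" by linarith
qed

lemma supporting_lines_powr_concave:
  assumes "0 \<le> e" "e \<le> 1"
  shows "supporting_lines {0<..} {0..} (\<lambda>x. - (x powr e)) (\<lambda>t. - (e * t powr (e - 1)))"
proof (rule supporting_linesI)
  fix t x :: real assume "t \<in> {0<..}" "x \<in> {0..}"
  then have t: "0 < t" and x: "0 \<le> x" by auto
  have "x powr e * t powr (1 - e) \<le> e * x + (1 - e) * t"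
  proof (cases "x = 0")
    case True then show ?thesis using assms t by simp
  next
    case False then show ?thesis using Youngs_inequality_0[of e "1 - e" x t] assms t x by simp
  qed
  then have "x powr e \<le> (e * x + (1 - e) * t) * t powr (e - 1)"
    using t by (simp add: powr_diff divide_simps)
  also have "\<dots> = t powr e + e * t powr (e - 1) * (x - t)"
    using t by (simp add: powr_diff field_simps)
  finally show "- (t powr e) + - (e * t powr (e - 1)) * (x - t) \<le> - (x powr e)" by simp
qed

lemma supporting_lines_powr_convex_ge_1:
  assumes "1 \<le> e"
  shows "supporting_lines {0<..} {0..} (\<lambda>x. x powr e) (\<lambda>t. e * t powr (e - 1))"
proof (rule supporting_linesI)
  fix t x :: real assume "t \<in> {0<..}" "x \<in> {0..}"
  then have t: "0 < t" and x: "0 \<le> x" by auto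
  have "x * t powr (e - 1) \<le> x powr e / e + (1 - 1 / e) * t powr e"
  proof (cases "x = 0")
    case True then show ?thesis using assms t by simp
  next
    case False
    then have "(x powr e) powr (1 / e) * (t powr e) powr (1 - 1 / e)
        \<le> 1 / e * x powr e + (1 - 1 / e) * t powr e"
      using Youngs_inequality_0[of "1 / e" "1 - 1 / e" "x powr e" "t powr e"] assms t x by simp
    moreover have "(x powr e) powr (1 / e) * (t powr e) powr (1 - 1 / e) = x * t powr (e - 1)"
      using assms t x by (simp add: powr_powr algebra_simps)
    ultimately show ?thesis by simp
  qed
  then have "e * (x * t powr (e - 1)) \<le> x powr e + (e - 1) * t powr e"
    using assms by (simp add: field_simps)
  moreover have "t powr e = t powr (e - 1) * t"
    using t by (simp add: powr_diff)
  ultimately show "t powr e + e * t powr (e - 1) * (x - t) \<le> x powr e"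
    by (simp add: algebra_simps)
qed

lemma supporting_lines_powr_convex_le_0:
  assumes "e \<le> 0"
  shows "supporting_lines {0<..} {0<..} (\<lambda>x. x powr e) (\<lambda>t. e * t powr (e - 1))"
proof (rule supporting_linesI)
  fix t x :: real assume "t \<in> {0<..}" "x \<in> {0<..}"
  then have t: "0 < t" and x: "0 < x" by auto
  have "(x powr e) powr (1 / (1 - e)) * (x * t powr (e - 1)) powr (- e / (1 - e))
      \<le> 1 / (1 - e) * x powr e + - e / (1 - e) * (x * t powr (e - 1))"
    using Youngs_inequality_0[of "1 / (1 - e)" "- e / (1 - e)" "x powr e" "x * t powr (e - 1)"]
      assms t x by (simp add: field_simps)
  moreover have "(x powr e) powr (1 / (1 - e)) * (x * t powr (e - 1)) powr (- e / (1 - e)) = t powr e"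
  proof -
    have "(e - 1) * (- e / (1 - e)) = e" using assms by (simp add: field_simps)
    then have "(x * t powr (e - 1)) powr (- e / (1 - e)) = x powr (- e / (1 - e)) * t powr e"
      using t x by (simp add: powr_mult powr_powr)
    moreover have "(x powr e) powr (1 / (1 - e)) * x powr (- e / (1 - e)) = 1"
      using x by (simp add: powr_powr flip: powr_add)
    ultimately show ?thesis by simp
  qed
  ultimately have "t powr e \<le> (x powr e - e * (x * t powr (e - 1))) / (1 - e)"
    by (simp add: diff_divide_distrib)
  then have "(1 - e) * t powr e \<le> x powr e - e * (x * t powr (e - 1))"
    using assms by (simp add: pos_le_divide_eq mult.commute)
  moreover have "t powr e = t powr (e - 1) * t"
    using t by (simp add: powr_diff)
  ultimately show "t powr e + e * t powr (e - 1) * (x - t) \<le> x powr e"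
    by (simp add: algebra_simps)
qed

lemma supporting_lines_mult_powr:
  assumes "0 \<le> k * e * (e - 1)"
  shows "supporting_lines {0<..} {0<..} (\<lambda>x. k * x powr e) (\<lambda>t. k * e * t powr (e - 1))"
proof -
  have convex: "supporting_lines {0<..} {0<..} (\<lambda>x. x powr e) (\<lambda>t. e * t powr (e - 1))"
    if "e \<le> 0 \<or> 1 \<le> e"
    using that supporting_lines_powr_convex_le_0
      supporting_lines_subset[OF supporting_lines_powr_convex_ge_1 subset_refl Ioi_le_Ico] by auto
  have concave: "supporting_lines {0<..} {0<..} (\<lambda>x. - (x powr e)) (\<lambda>t. - (e * t powr (e - 1)))"
    if "0 \<le> e" "e \<le> 1"
    using supporting_lines_subset[OF supporting_lines_powr_concave[OF that] subset_refl Ioi_le_Ico]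
    .
  have "0 \<le> k \<and> (e \<le> 0 \<or> 1 \<le> e) \<or> k \<le> 0 \<and> 0 \<le> e \<and> e \<le> 1"
    using assms by (cases "k = 0") (auto simp: zero_le_mult_iff mult_le_0_iff)
  then consider "0 \<le> k" "e \<le> 0 \<or> 1 \<le> e" | "k \<le> 0" "0 \<le> e" "e \<le> 1"
    by blast
  then show ?thesis
  proof cases
    case 1
    then show ?thesis using supporting_lines_cmult[OF convex] by (simp add: mult.assoc)
  next
    case 2
    then show ?thesis using supporting_lines_cmult[OF concave, of "- k"] by (simp add: mult.assoc)
  qed
qed

lemma supporting_lines_minus_ln: "supporting_lines {0<..} {0<..} (\<lambda>x. - ln x) (\<lambda>t. - (1 / t))"
proof (rule supporting_linesI)
  fix t x :: real assume "t \<in> {0<..}" "x \<in> {0<..}"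
  then have "ln (x / t) \<le> x / t - 1" by (intro ln_le_minus_one) auto
  with \<open>t \<in> {0<..}\<close> \<open>x \<in> {0<..}\<close> show "- ln t + - (1 / t) * (x - t) \<le> - ln x"
    by (simp add: ln_div diff_divide_distrib)
qed

lemma supporting_lines_x_ln_x: "supporting_lines {0<..} {0..} (\<lambda>x. x * ln x) (\<lambda>t. ln t + 1)"
proof (rule supporting_linesI)
  fix t x :: real assume "t \<in> {0<..}" "x \<in> {0..}"
  then have t: "0 < t" and x: "0 \<le> x" by auto
  show "t * ln t + (ln t + 1) * (x - t) \<le> x * ln x"
  proof (cases "x = 0")
    case True then show ?thesis using t by (simp add: algebra_simps)
  next
    case False
    then have "ln (t / x) \<le> t / x - 1" using t x by (intro ln_le_minus_one) auto
    then have "x * (ln t - ln x) \<le> x * (t / x - 1)"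
      using False t x by (intro mult_left_mono) (auto simp: ln_div)
    then show ?thesis using False by (simp add: algebra_simps)
  qed
qed

lemma supporting_lines_exp: "supporting_lines UNIV UNIV exp exp"
proof (rule supporting_linesI)
  fix t x :: real
  have "exp t * (1 + (x - t)) \<le> exp t * exp (x - t)"
    by (intro mult_left_mono exp_ge_add_one_self) auto
  then show "exp t + exp t * (x - t) \<le> exp x"
    by (simp add: algebra_simps flip: exp_add)
qed

lemma supporting_lines_two_point:
  assumes f: "supporting_lines T S f d" "T \<subseteq> S"
    and "a \<in> S" "b \<in> S" "c \<in> T" "e \<in> T"
    and "a \<le> c" "c \<le> b" "a \<le> e" "e \<le> b" "c + e = a + b"
  shows "f c + f e \<le> f a + f b"
proof -
  have *: "f c + f e \<le> f a + f b"
    if "c \<in> T" "e \<in> T" "a \<le> c" "c \<le> e" "c + e = a + b" for c e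
  proof -
    have "f c + d c * (a - c) \<le> f a" "f e + d e * (b - e) \<le> f b"
      using f that \<open>a \<in> S\<close> \<open>b \<in> S\<close> by (auto intro: supporting_linesD)
    moreover have "d c \<le> d e" using supporting_lines_slope_mono f that by blast
    then have "0 \<le> (d e - d c) * (c - a)" using that by simp
    moreover have "b - e = c - a" using that by simp
    ultimately show ?thesis by (simp add: algebra_simps)
  qed
  show ?thesis
    using *[of c e] *[of e c] assms by (cases "c \<le> e") (simp_all add: add.commute)
qed

lemma supporting_lines_two_point_nonneg:
  assumes f: "supporting_lines {0<..} {0..} f d"
    and "0 \<le> a" "a \<le> c" "c \<le> b" "a \<le> e" "e \<le> b" "c + e = a + b"
  shows "f c + f e \<le> f a + f b"
proof (cases "c = 0 \<or> e = 0")
  case True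
  then have "c = a \<and> e = b \<or> e = a \<and> c = b" using assms by auto
  then show ?thesis by auto
next
  case False
  then show ?thesis using assms by (intro supporting_lines_two_point[OF f]) auto
qed

lemma antimono_supporting_lines_add_le:
  assumes g: "supporting_lines S S g dg" "antimono_on S g" "is_interval S"
    and S: "u \<in> S" "x \<in> S" "y \<in> S" "v \<in> S"
    and "x \<le> v" "y \<le> v" "u + v \<le> x + y"
  shows "g x + g y \<le> g u + g v"
proof -
  define w where "w = x + y - v"
  have "u \<le> w" "w \<le> x" "w \<le> y" using assms by (auto simp: w_def)
  then have "w \<in> S" using mem_is_interval_1_I[OF \<open>is_interval S\<close>] S by blast
  have "g x + g y \<le> g w + g v"
    using assms \<open>w \<in> S\<close> \<open>w \<le> x\<close> \<open>w \<le> y\<close>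
    by (intro supporting_lines_two_point[OF g(1)]) (auto simp: w_def)
  moreover have "g w \<le> g u"
    using \<open>u \<le> w\<close> \<open>w \<in> S\<close> S g(2) by (auto dest: monotone_onD)
  ultimately show ?thesis by simp
qed

section \<open>Karamata's inequality\<close>

abbreviation psum :: "(nat \<Rightarrow> real) \<Rightarrow> nat \<Rightarrow> real" where
  "psum f k \<equiv> \<Sum>i<k. f i"

lemma sum_by_parts:
  "(\<Sum>i<Suc m. c i * z i) = c m * psum z (Suc m) + (\<Sum>k<m. (c k - c (Suc k)) * psum z (Suc k))"
  by (induction m) (simp_all add: algebra_simps)

(* The majorization hypothesis may fail where y is constant: there the Abel summation terms
   (c k - c (Suc k)) * (psum x (Suc k) - psum y (Suc k)) below vanish. *)
lemma karamata_inequality: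
  assumes \<psi>: "supporting_lines {0<..} {0..} \<psi> d"
    and x: "\<forall>i<n. 0 \<le> x i" and y: "\<forall>i<n. 0 \<le> y i"
    and y_sorted: "\<forall>i j. i \<le> j \<longrightarrow> j < n \<longrightarrow> y j \<le> y i"
    and total: "psum y n = psum x n"
    and partial: "\<forall>k. Suc k < n \<longrightarrow> psum y (Suc k) \<le> psum x (Suc k) \<or> y (Suc k) = y k"
  shows "(\<Sum>i<n. \<psi> (y i)) \<le> (\<Sum>i<n. \<psi> (x i))"
proof -
  (* At y i = 0 there need not be a supporting slope (think of t ln t); any slope below all
     d (y k) and all chord slopes from 0 serves instead. *)
  define L where "L = - (\<Sum>k<n. \<bar>d (y k)\<bar> + \<bar>(\<psi> (x k) - \<psi> 0) / x k\<bar>)"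
  have L: "L \<le> d (y k)" "L \<le> (\<psi> (x k) - \<psi> 0) / x k" if "k < n" for k
  proof -
    have "\<bar>d (y k)\<bar> + \<bar>(\<psi> (x k) - \<psi> 0) / x k\<bar> \<le> (\<Sum>k<n. \<bar>d (y k)\<bar> + \<bar>(\<psi> (x k) - \<psi> 0) / x k\<bar>)"
      using that by (intro member_le_sum) auto
    then show "L \<le> d (y k)" "L \<le> (\<psi> (x k) - \<psi> 0) / x k"
      unfolding L_def using abs_ge_minus_self[of "d (y k)"] abs_ge_zero[of "d (y k)"]
        abs_ge_minus_self[of "(\<psi> (x k) - \<psi> 0) / x k"] abs_ge_zero[of "(\<psi> (x k) - \<psi> 0) / x k"]
      by linarith+
  qed
  define c where "c i = (if 0 < y i then d (y i) else L)" for i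
  have c_antimono: "c j \<le> c i" if "i \<le> j" "j < n" for i j
  proof (cases "0 < y j")
    case True
    moreover have "y j \<le> y i" using that y_sorted by blast
    ultimately show ?thesis
      using supporting_lines_slope_mono[OF \<psi> Ioi_le_Ico, of "y j" "y i"] by (simp add: c_def)
  next
    case False
    then show ?thesis using L(1)[of i] that by (simp add: c_def)
  qed
  have tangent: "\<psi> (y i) + c i * (x i - y i) \<le> \<psi> (x i)" if "i < n" for i
  proof (cases "0 < y i")
    case True then show ?thesis using that x by (auto simp: c_def intro: supporting_linesD[OF \<psi>])
  next
    case False
    then have "y i = 0" using y that by force
    moreover have "L * x i \<le> \<psi> (x i) - \<psi> 0"
      using L(2)[OF that] x that by (cases "x i = 0") (auto simp: pos_le_divide_eq)
    ultimately show ?thesis using False by (simp add: c_def mult.commute)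
  qed
  have "0 \<le> (\<Sum>i<n. c i * (x i - y i))"
  proof (cases n)
    case (Suc m)
    have "(\<Sum>i<n. c i * (x i - y i)) = (\<Sum>k<m. (c k - c (Suc k)) * (psum x (Suc k) - psum y (Suc k)))"
      using sum_by_parts[of c "\<lambda>i. x i - y i" m] total Suc by (simp add: sum_subtractf)
    also have "\<dots> \<ge> 0"
    proof (intro sum_nonneg)
      fix k assume "k \<in> {..<m}"
      then show "0 \<le> (c k - c (Suc k)) * (psum x (Suc k) - psum y (Suc k))"
        using partial c_antimono[of k "Suc k"] Suc by (auto simp: c_def)
    qed
    finally show ?thesis .
  qed simp
  moreover have "(\<Sum>i<n. \<psi> (y i)) + (\<Sum>i<n. c i * (x i - y i)) \<le> (\<Sum>i<n. \<psi> (x i))"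
    unfolding sum.distrib[symmetric] using tangent by (intro sum_mono) auto
  ultimately show ?thesis by linarith
qed

section \<open>Meet and join in the majorization lattice\<close>

lemma prob_vec_nonneg: "prob_vec n p \<Longrightarrow> i < n \<Longrightarrow> 0 \<le> p i"
  by (simp add: prob_vec_def)

lemma prob_vec_sum: "prob_vec n p \<Longrightarrow> psum p n = 1"
  by (simp add: prob_vec_def)

lemma prob_vec_antimono: "prob_vec n p \<Longrightarrow> i \<le> j \<Longrightarrow> j < n \<Longrightarrow> p j \<le> p i"
  by (simp add: prob_vec_def)

lemma prob_vec_psum_mono:
  assumes "prob_vec n p" "i \<le> k" "k \<le> n"
  shows "psum p i \<le> psum p k"
  using assms by (intro sum_mono2) (auto simp: prob_vec_def)

lemma prob_vec_psum_le_1: "prob_vec n p \<Longrightarrow> k \<le> n \<Longrightarrow> psum p k \<le> 1"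
  using prob_vec_psum_mono[of n p k n] prob_vec_sum by simp

lemma prob_vec_dim_pos: "prob_vec n p \<Longrightarrow> 0 < n"
  by (cases n) (auto simp: prob_vec_def)

lemma prob_vec_powr_sum_pos:
  assumes "prob_vec n p"
  shows "0 < (\<Sum>i<n. p i powr a)"
proof -
  obtain i where "i < n" "0 < p i"
    using assms sum_nonpos[of "{..<n}" p] by (force simp: prob_vec_def not_less)
  then have "0 < p i powr a" "p i powr a \<le> (\<Sum>i<n. p i powr a)"
    by (auto intro: member_le_sum)
  then show ?thesis by linarith
qed

lemma majorized_psum_le: "majorized n p s \<Longrightarrow> k \<le> n \<Longrightarrow> psum p k \<le> psum s k"
  by (cases "k = 0") (auto simp: majorized_def)

lemma majorized_antisym:
  assumes "majorized n r s" "majorized n s r" "\<forall>i\<ge>n. r i = 0" "\<forall>i\<ge>n. s i = 0"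
  shows "r = s"
proof
  fix i
  have psum_eq: "psum r k = psum s k" if "k \<le> n" for k
    using majorized_psum_le[OF assms(1) that] majorized_psum_le[OF assms(2) that] by simp
  show "r i = s i"
  proof (cases "i < n")
    case True
    then show ?thesis using psum_eq[of i] psum_eq[of "Suc i"] by simp
  qed (use assms(3,4) in simp)
qed

definition discrete_concave :: "nat \<Rightarrow> (nat \<Rightarrow> real) \<Rightarrow> bool" where
  "discrete_concave n K \<longleftrightarrow> (\<forall>k. Suc (Suc k) \<le> n \<longrightarrow> K k + K (Suc (Suc k)) \<le> 2 * K (Suc k))"

lemma discrete_concave_min:
  "discrete_concave n K \<Longrightarrow> discrete_concave n H \<Longrightarrow> discrete_concave n (\<lambda>k. min (K k) (H k))"
  unfolding discrete_concave_def by (smt (verit))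

lemma discrete_concave_psum: "prob_vec n p \<Longrightarrow> discrete_concave n (psum p)"
  using prob_vec_antimono[of n p] by (auto simp: discrete_concave_def)

lemma discrete_concave_increments_antimono:
  assumes "discrete_concave n K" "i \<le> j" "j < n"
  shows "K (Suc j) - K j \<le> K (Suc i) - K i"
  using assms(2,3)
proof (induction j)
  case (Suc j)
  show ?case
  proof (cases "i = Suc j")
    case False
    then have "K (Suc j) - K j \<le> K (Suc i) - K i" using Suc by simp
    moreover have "K j + K (Suc (Suc j)) \<le> 2 * K (Suc j)"
      using assms(1) Suc.prems by (simp add: discrete_concave_def)
    ultimately show ?thesis by simp
  qed simp
qed simp

definition increments :: "nat \<Rightarrow> (nat \<Rightarrow> real) \<Rightarrow> nat \<Rightarrow> real" where
  "increments n K i = (if i < n then K (Suc i) - K i else 0)"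

lemma psum_increments: "k \<le> n \<Longrightarrow> psum (increments n K) k = K k - K 0"
  by (simp add: increments_def sum_lessThan_telescope)

lemma prob_vec_increments:
  assumes "discrete_concave n K" "K 0 = 0" "K n = 1" "\<forall>k\<le>n. K k \<le> 1" "0 < n"
  shows "prob_vec n (increments n K)"
proof -
  have last: "0 \<le> K n - K (n - 1)" using assms by simp
  have "0 \<le> K (Suc i) - K i" if "i < n" for i
  proof -
    have "i \<le> n - 1" "Suc (n - 1) = n" using that by auto
    then show ?thesis
      using last discrete_concave_increments_antimono[OF assms(1), of i "n - 1"] by simp
  qed
  moreover have "(\<Sum>i<n. K (Suc i) - K i) = 1"
    using assms by (simp add: sum_lessThan_telescope)
  ultimately show ?thesis
    using discrete_concave_increments_antimono[OF assms(1)]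
    by (simp add: prob_vec_def increments_def)
qed

lemma pmeet_eq_increments: "pmeet n p q = increments n (\<lambda>k. min (psum p k) (psum q k))"
  by (simp add: fun_eq_iff pmeet_def increments_def)

lemma prob_vec_pmeet:
  assumes p: "prob_vec n p" and q: "prob_vec n q"
  shows "prob_vec n (pmeet n p q)"
  unfolding pmeet_eq_increments
  using assms prob_vec_psum_le_1[OF p] prob_vec_dim_pos[OF p]
  by (intro prob_vec_increments discrete_concave_min discrete_concave_psum)
    (auto simp: prob_vec_sum min_le_iff_disj)

definition concave_majorant :: "nat \<Rightarrow> (nat \<Rightarrow> real) \<Rightarrow> (nat \<Rightarrow> real) \<Rightarrow> bool" where
  "concave_majorant n W K \<longleftrightarrow> (\<forall>k\<le>n. W k \<le> K k) \<and> discrete_concave n K"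

definition least_concave_majorant :: "nat \<Rightarrow> (nat \<Rightarrow> real) \<Rightarrow> nat \<Rightarrow> real" where
  "least_concave_majorant n W k = Inf {K k |K. concave_majorant n W K}"

lemma concave_majorant_const: "(\<And>k. k \<le> n \<Longrightarrow> W k \<le> c) \<Longrightarrow> concave_majorant n W (\<lambda>_. c)"
  by (simp add: concave_majorant_def discrete_concave_def)

lemma least_concave_majorant_le:
  assumes "concave_majorant n W K" "k \<le> n"
  shows "least_concave_majorant n W k \<le> K k"
  unfolding least_concave_majorant_def
proof (rule cInf_lower)
  show "K k \<in> {K k |K. concave_majorant n W K}" using assms(1) by blast
  show "bdd_below {K k |K. concave_majorant n W K}"
    using assms(2) by (auto simp: concave_majorant_def bdd_below_def)
qed

lemma least_concave_majorant_greatest: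
  "(\<And>K. concave_majorant n W K \<Longrightarrow> c \<le> K k) \<Longrightarrow> c \<le> least_concave_majorant n W k"
  unfolding least_concave_majorant_def
  by (rule cInf_greatest) (use concave_majorant_const[of n W "Max (W ` {..n})"] in auto)

lemma least_concave_majorant_ge: "k \<le> n \<Longrightarrow> W k \<le> least_concave_majorant n W k"
  by (rule least_concave_majorant_greatest) (simp add: concave_majorant_def)

lemma concave_majorant_least: "concave_majorant n W (least_concave_majorant n W)"
proof -
  let ?L = "least_concave_majorant n W"
  have "?L k + ?L (Suc (Suc k)) \<le> 2 * ?L (Suc k)" if "Suc (Suc k) \<le> n" for k
  proof -
    have "(?L k + ?L (Suc (Suc k))) / 2 \<le> ?L (Suc k)"
    proof (rule least_concave_majorant_greatest)
      fix K assume K: "concave_majorant n W K"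
      have "?L k \<le> K k" "?L (Suc (Suc k)) \<le> K (Suc (Suc k))"
        using least_concave_majorant_le[OF K] that by auto
      moreover have "K k + K (Suc (Suc k)) \<le> 2 * K (Suc k)"
        using K that by (simp add: concave_majorant_def discrete_concave_def)
      ultimately show "(?L k + ?L (Suc (Suc k))) / 2 \<le> K (Suc k)" by simp
    qed
    then show ?thesis by simp
  qed
  then show ?thesis
    using least_concave_majorant_ge by (simp add: concave_majorant_def discrete_concave_def)
qed

lemma least_concave_majorant_endpoints:
  "least_concave_majorant n W 0 = W 0" "least_concave_majorant n W n = W n"
proof -
  let ?L = "least_concave_majorant n W"
  have "concave_majorant n W (?L(0 := W 0))" "concave_majorant n W (?L(n := W n))"
    using concave_majorant_least[of n W]
      least_concave_majorant_ge[of 0 n W] least_concave_majorant_ge[of n n W]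
    by (fastforce simp: concave_majorant_def discrete_concave_def)+
  then have "?L 0 \<le> W 0" "?L n \<le> W n"
    using least_concave_majorant_le by fastforce+
  then show "?L 0 = W 0" "?L n = W n"
    using least_concave_majorant_ge[of 0 n W] least_concave_majorant_ge[of n n W] by simp_all
qed

lemma least_concave_majorant_flat:
  fixes n k :: nat and W :: "nat \<Rightarrow> real"
  defines "L \<equiv> least_concave_majorant n W"
  assumes "Suc k < n" "W (Suc k) < L (Suc k)"
  shows "L (Suc (Suc k)) - L (Suc k) = L (Suc k) - L k"
proof (rule ccontr)
  assume "L (Suc (Suc k)) - L (Suc k) \<noteq> L (Suc k) - L k"
  (* Then L is strictly concave at Suc k and can be lowered there, contradicting minimality. *)
  moreover have concave: "discrete_concave n L" and above: "\<forall>j\<le>n. W j \<le> L j"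
    using concave_majorant_least[of n W] by (simp_all add: L_def concave_majorant_def)
  moreover have "L k + L (Suc (Suc k)) \<le> 2 * L (Suc k)"
    using concave assms(2) by (simp add: discrete_concave_def)
  ultimately have gap: "L k + L (Suc (Suc k)) < 2 * L (Suc k)" by linarith
  define \<epsilon> where "\<epsilon> = min (L (Suc k) - W (Suc k)) ((2 * L (Suc k) - L k - L (Suc (Suc k))) / 2)"
  have "0 < \<epsilon>" using gap assms(3) by (simp add: \<epsilon>_def)
  have "concave_majorant n W (L(Suc k := L (Suc k) - \<epsilon>))"
    unfolding concave_majorant_def discrete_concave_def
  proof (intro conjI allI impI)
    fix j assume "j \<le> n"
    then show "W j \<le> (L(Suc k := L (Suc k) - \<epsilon>)) j" using above by (auto simp: \<epsilon>_def)
  next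
    fix j assume "Suc (Suc j) \<le> n"
    then have "L j + L (Suc (Suc j)) \<le> 2 * L (Suc j)"
      using concave by (simp add: discrete_concave_def)
    moreover have "2 * \<epsilon> \<le> 2 * L (Suc k) - L k - L (Suc (Suc k))"
      by (simp add: \<epsilon>_def min_def)
    ultimately show "(L(Suc k := L (Suc k) - \<epsilon>)) j + (L(Suc k := L (Suc k) - \<epsilon>)) (Suc (Suc j))
        \<le> 2 * (L(Suc k := L (Suc k) - \<epsilon>)) (Suc j)"
      using \<open>0 < \<epsilon>\<close> by auto
  qed
  then have "L (Suc k) \<le> L (Suc k) - \<epsilon>"
    using least_concave_majorant_le[of n W _ "Suc k"] assms(2) unfolding L_def by fastforce
  with \<open>0 < \<epsilon>\<close> show False by simp
qed

lemma prob_vec_join_increments: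
  assumes p: "prob_vec n p" and q: "prob_vec n q"
  shows "prob_vec n (increments n (least_concave_majorant n (\<lambda>k. max (psum p k) (psum q k))))"
    (is "prob_vec n (increments n ?L)")
proof (rule prob_vec_increments)
  have "concave_majorant n (\<lambda>k. max (psum p k) (psum q k)) (\<lambda>_. 1)"
    using prob_vec_psum_le_1[OF p] prob_vec_psum_le_1[OF q] by (intro concave_majorant_const) simp
  then show "\<forall>k\<le>n. ?L k \<le> 1"
    using least_concave_majorant_le by fastforce
qed (use concave_majorant_least prob_vec_dim_pos[OF p] in
  \<open>auto simp: concave_majorant_def least_concave_majorant_endpoints prob_vec_sum p q\<close>)

lemma pjoin_eq_increments:
  assumes p: "prob_vec n p" and q: "prob_vec n q"
  shows "pjoin n p q = increments n (least_concave_majorant n (\<lambda>k. max (psum p k) (psum q k)))"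
    (is "_ = increments n ?L")
proof -
  let ?W = "\<lambda>k. max (psum p k) (psum q k)"
  let ?r = "increments n ?L"
  have psum_r: "psum ?r k = ?L k" if "k \<le> n" for k
    using that by (simp add: psum_increments least_concave_majorant_endpoints)
  have "prob_vec n ?r"
    using p q by (rule prob_vec_join_increments)
  moreover have "majorized n p ?r" "majorized n q ?r"
    using least_concave_majorant_ge[of _ n ?W] psum_r by (force simp: majorized_def)+
  moreover have "majorized n ?r s"
    if "prob_vec n s" "majorized n p s" "majorized n q s" for s
  proof -
    have "concave_majorant n ?W (psum s)"
      using that discrete_concave_psum[OF that(1)] majorized_psum_le
      by (auto simp: concave_majorant_def)
    then show ?thesis
      using least_concave_majorant_le psum_r by (auto simp: majorized_def)
  qed
  moreover have "\<forall>i\<ge>n. ?r i = 0" by (simp add: increments_def)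
  ultimately show ?thesis
    unfolding pjoin_def by (intro the_equality) (auto intro: majorized_antisym)
qed

lemma psum_pjoin:
  assumes "prob_vec n p" "prob_vec n q" "k \<le> n"
  shows "psum (pjoin n p q) k = least_concave_majorant n (\<lambda>k. max (psum p k) (psum q k)) k"
  using assms by (simp add: pjoin_eq_increments psum_increments least_concave_majorant_endpoints)

lemma prob_vec_pjoin: "prob_vec n p \<Longrightarrow> prob_vec n q \<Longrightarrow> prob_vec n (pjoin n p q)"
  by (simp add: pjoin_eq_increments prob_vec_join_increments)

lemma majorized_pjoin:
  assumes "prob_vec n p" "prob_vec n q"
  shows "majorized n p (pjoin n p q)" "majorized n q (pjoin n p q)"
  using least_concave_majorant_ge[of _ n "\<lambda>k. max (psum p k) (psum q k)"]
  by (force simp: majorized_def psum_pjoin[OF assms])+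

section \<open>Supermodularity\<close>

lemma sum_le_sum_of_majorized:
  assumes \<psi>: "supporting_lines {0<..} {0..} \<psi> d"
    and "prob_vec n p" "prob_vec n r" "majorized n p r"
  shows "(\<Sum>i<n. \<psi> (p i)) \<le> (\<Sum>i<n. \<psi> (r i))"
proof (rule karamata_inequality[OF \<psi>])
  show "\<forall>k. Suc k < n \<longrightarrow> psum p (Suc k) \<le> psum r (Suc k) \<or> p (Suc k) = p k"
    using majorized_psum_le[OF assms(4)] less_imp_le by blast
qed (use assms(2,3) in \<open>simp_all add: prob_vec_def\<close>)

lemma sum_pjoin_le_sum_increments_max:
  assumes \<psi>: "supporting_lines {0<..} {0..} \<psi> d"
    and p: "prob_vec n p" and q: "prob_vec n q"
  shows "(\<Sum>i<n. \<psi> (pjoin n p q i)) \<le> (\<Sum>i<n. \<psi> (increments n (\<lambda>k. max (psum p k) (psum q k)) i))"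
proof -
  define W where "W = (\<lambda>k. max (psum p k) (psum q k))"
  define L where "L = least_concave_majorant n W"
  define w where "w = increments n W"
  have psum_w: "psum w k = W k" if "k \<le> n" for k
    using that by (simp add: w_def W_def psum_increments)
  have psum_join: "psum (pjoin n p q) k = L k" if "k \<le> n" for k
    using psum_pjoin[OF p q that] by (simp add: L_def W_def)
  have "(\<Sum>i<n. \<psi> (pjoin n p q i)) \<le> (\<Sum>i<n. \<psi> (w i))"
  proof (rule karamata_inequality[OF \<psi>])
    show "\<forall>i<n. 0 \<le> w i"
    proof (intro allI impI)
      fix i assume "i < n"
      then have "psum p i \<le> psum p (Suc i)" "psum q i \<le> psum q (Suc i)"
        using prob_vec_nonneg[OF p] prob_vec_nonneg[OF q] by simp_all
      then have "W i \<le> W (Suc i)" unfolding W_def by (rule max.mono)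
      then show "0 \<le> w i" by (simp add: w_def increments_def)
    qed
    show "\<forall>i<n. 0 \<le> pjoin n p q i" "\<forall>i j. i \<le> j \<longrightarrow> j < n \<longrightarrow> pjoin n p q j \<le> pjoin n p q i"
      using prob_vec_pjoin[OF p q] by (simp_all add: prob_vec_def)
    show "psum (pjoin n p q) n = psum w n"
      using psum_w psum_join least_concave_majorant_endpoints(2) by (simp add: L_def)
    show "\<forall>k. Suc k < n \<longrightarrow>
        psum (pjoin n p q) (Suc k) \<le> psum w (Suc k) \<or> pjoin n p q (Suc k) = pjoin n p q k"
    proof (intro allI impI)
      fix k assume k: "Suc k < n"
      show "psum (pjoin n p q) (Suc k) \<le> psum w (Suc k) \<or> pjoin n p q (Suc k) = pjoin n p q k"
      proof (cases "W (Suc k) < L (Suc k)")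
        case True
        then have "L (Suc (Suc k)) - L (Suc k) = L (Suc k) - L k"
          using least_concave_majorant_flat[of k n W] k by (simp add: L_def)
        moreover have "pjoin n p q (Suc k) = L (Suc (Suc k)) - L (Suc k)"
            "pjoin n p q k = L (Suc k) - L k"
          using k psum_join[of "Suc (Suc k)"] psum_join[of "Suc k"] psum_join[of k] by simp_all
        ultimately show ?thesis by simp
      next
        case False
        then show ?thesis using k psum_w[of "Suc k"] psum_join[of "Suc k"] by simp
      qed
    qed
  qed
  then show ?thesis by (simp add: w_def W_def)
qed

lemma sum_pmeet_add_sum_pjoin_le:
  assumes \<psi>: "supporting_lines {0<..} {0..} \<psi> d"
    and p: "prob_vec n p" and q: "prob_vec n q"
  shows "(\<Sum>i<n. \<psi> (pmeet n p q i)) + (\<Sum>i<n. \<psi> (pjoin n p q i))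
    \<le> (\<Sum>i<n. \<psi> (p i)) + (\<Sum>i<n. \<psi> (q i))"
proof -
  define w where "w = increments n (\<lambda>k. max (psum p k) (psum q k))"
  have "\<psi> (pmeet n p q i) + \<psi> (w i) \<le> \<psi> (p i) + \<psi> (q i)" if "i < n" for i
  proof -
    have "\<psi> (pmeet n p q i) + \<psi> (w i) \<le> \<psi> (min (p i) (q i)) + \<psi> (max (p i) (q i))"
      using that prob_vec_nonneg[OF p that] prob_vec_nonneg[OF q that]
      by (intro supporting_lines_two_point_nonneg[OF \<psi>])
        (auto simp: pmeet_def w_def increments_def min_def max_def)
    then show ?thesis by (cases "p i \<le> q i") (simp_all add: min_def max_def add.commute)
  qed
  then have "(\<Sum>i<n. \<psi> (pmeet n p q i)) + (\<Sum>i<n. \<psi> (w i)) \<le> (\<Sum>i<n. \<psi> (p i)) + (\<Sum>i<n. \<psi> (q i))"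
    unfolding sum.distrib[symmetric] by (intro sum_mono) auto
  moreover have "(\<Sum>i<n. \<psi> (pjoin n p q i)) \<le> (\<Sum>i<n. \<psi> (w i))"
    unfolding w_def by (rule sum_pjoin_le_sum_increments_max[OF \<psi> p q])
  ultimately show ?thesis by linarith
qed

lemma supermodular_antimono_convex_comp:
  assumes \<psi>: "supporting_lines {0<..} {0..} \<psi> d"
    and g: "supporting_lines S S g dg" "is_interval S" "\<And>t. t \<in> S \<Longrightarrow> dg t \<le> 0"
    and F: "\<And>x. prob_vec n x \<Longrightarrow> (\<Sum>i<n. \<psi> (x i)) \<in> S \<and> F x = g (\<Sum>i<n. \<psi> (x i))"
    and p: "prob_vec n p" and q: "prob_vec n q"
  shows "F p + F q \<le> F (pmeet n p q) + F (pjoin n p q)"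
proof -
  have m: "prob_vec n (pmeet n p q)" and r: "prob_vec n (pjoin n p q)"
    using prob_vec_pmeet[OF p q] prob_vec_pjoin[OF p q] .
  have "g (\<Sum>i<n. \<psi> (p i)) + g (\<Sum>i<n. \<psi> (q i))
      \<le> g (\<Sum>i<n. \<psi> (pmeet n p q i)) + g (\<Sum>i<n. \<psi> (pjoin n p q i))"
  proof (rule antimono_supporting_lines_add_le[OF g(1) supporting_lines_antimono[OF g(1,3)] g(2)])
    show "(\<Sum>i<n. \<psi> (p i)) \<le> (\<Sum>i<n. \<psi> (pjoin n p q i))" "(\<Sum>i<n. \<psi> (q i)) \<le> (\<Sum>i<n. \<psi> (pjoin n p q i))"
      using sum_le_sum_of_majorized[OF \<psi>] majorized_pjoin[OF p q] p q r by blast+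
  qed (use F[OF p] F[OF q] F[OF m] F[OF r] sum_pmeet_add_sum_pjoin_le[OF \<psi> p q] in auto)
  then show ?thesis using F p q m r by simp
qed

lemma sharma_mittal_supermodular_alpha_gt_1:
  assumes "1 < \<alpha>" "\<beta> \<le> \<alpha>" and p: "prob_vec n p" and q: "prob_vec n q"
  shows "sharma_mittal \<alpha> \<beta> n p + sharma_mittal \<alpha> \<beta> n q
    \<le> sharma_mittal \<alpha> \<beta> n (pmeet n p q) + sharma_mittal \<alpha> \<beta> n (pjoin n p q)"
proof -
  have \<psi>: "supporting_lines {0<..} {0..} (\<lambda>x. x powr \<alpha>) (\<lambda>t. \<alpha> * t powr (\<alpha> - 1))"
    using assms by (intro supporting_lines_powr_convex_ge_1) simp
  have pos: "(\<Sum>i<n. x i powr \<alpha>) \<in> {0<..}" if "prob_vec n x" for x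
    using prob_vec_powr_sum_pos[OF that] by simp
  show ?thesis
  proof (cases "\<beta> = 1")
    case True
    show ?thesis
    proof (rule supermodular_antimono_convex_comp[OF \<psi>
          supporting_lines_cmult[OF supporting_lines_minus_ln] is_interval_oi _ _ p q])
      show "0 \<le> 1 / (\<alpha> - 1)" "\<And>t. t \<in> {0<..} \<Longrightarrow> 1 / (\<alpha> - 1) * - (1 / t) \<le> 0"
        using assms by (auto simp: field_split_simps)
      show "\<And>x. prob_vec n x \<Longrightarrow> (\<Sum>i<n. x i powr \<alpha>) \<in> {0<..} \<and>
          sharma_mittal \<alpha> \<beta> n x = 1 / (\<alpha> - 1) * - ln (\<Sum>i<n. x i powr \<alpha>)"
        using pos True assms by (auto simp: sharma_mittal_def field_split_simps)
    qed
  next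
    case False
    define k e where "k = 1 / (1 - \<beta>)" and "e = (1 - \<beta>) / (1 - \<alpha>)"
    have "k * e = 1 / (1 - \<alpha>)" "e - 1 = (\<alpha> - \<beta>) / (1 - \<alpha>)"
      using False assms by (auto simp: k_def e_def field_split_simps)
    then have "k * e < 0" "e - 1 \<le> 0"
      using assms by (simp_all add: divide_nonneg_neg)
    then have "0 \<le> k * e * (e - 1)" by (simp add: mult_nonpos_nonpos)
    show ?thesis
    proof (rule supermodular_antimono_convex_comp[OF \<psi>
          supporting_lines_add_const[OF supporting_lines_mult_powr[OF \<open>0 \<le> k * e * (e - 1)\<close>]]
          is_interval_oi _ _ p q])
      show "\<And>t. t \<in> {0<..} \<Longrightarrow> k * e * t powr (e - 1) \<le> 0"
        using \<open>k * e < 0\<close> by (simp add: mult_nonpos_nonneg)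
      show "\<And>x. prob_vec n x \<Longrightarrow> (\<Sum>i<n. x i powr \<alpha>) \<in> {0<..} \<and>
          sharma_mittal \<alpha> \<beta> n x = k * (\<Sum>i<n. x i powr \<alpha>) powr e + - k"
        using pos False assms by (auto simp: sharma_mittal_def k_def e_def algebra_simps)
    qed
  qed
qed

lemma sharma_mittal_supermodular_alpha_lt_1:
  assumes "0 < \<alpha>" "\<alpha> < 1" "\<beta> \<le> \<alpha>" and p: "prob_vec n p" and q: "prob_vec n q"
  shows "sharma_mittal \<alpha> \<beta> n p + sharma_mittal \<alpha> \<beta> n q
    \<le> sharma_mittal \<alpha> \<beta> n (pmeet n p q) + sharma_mittal \<alpha> \<beta> n (pjoin n p q)"
proof -
  (* Here t powr \<alpha> is concave, so we sum its negative and compose with a function on {..<0}. *)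
  have \<psi>: "supporting_lines {0<..} {0..} (\<lambda>x. - (x powr \<alpha>)) (\<lambda>t. - (\<alpha> * t powr (\<alpha> - 1)))"
    using assms by (intro supporting_lines_powr_concave) simp_all
  define k e where "k = 1 / (1 - \<beta>)" and "e = (1 - \<beta>) / (1 - \<alpha>)"
  have "0 < k" "1 \<le> e" using assms by (simp_all add: k_def e_def)
  then have "0 \<le> k * e * (e - 1)" by simp
  have g: "supporting_lines {..<0} {..<0} (\<lambda>s. k * (- 1 * s) powr e)
      (\<lambda>t. - 1 * (k * e * (- 1 * t) powr (e - 1)))"
    by (rule supporting_lines_scale[OF supporting_lines_mult_powr[OF \<open>0 \<le> k * e * (e - 1)\<close>]]) auto
  show ?thesis
  proof (rule supermodular_antimono_convex_comp[OF \<psi> supporting_lines_add_const[OF g]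
        is_interval_io _ _ p q])
    show "\<And>t. t \<in> {..<0} \<Longrightarrow> - 1 * (k * e * (- 1 * t) powr (e - 1)) \<le> 0"
      using \<open>0 < k\<close> \<open>1 \<le> e\<close> by simp
    show "\<And>x. prob_vec n x \<Longrightarrow> (\<Sum>i<n. - (x i powr \<alpha>)) \<in> {..<0} \<and>
        sharma_mittal \<alpha> \<beta> n x = k * (- 1 * (\<Sum>i<n. - (x i powr \<alpha>))) powr e + - k"
      using prob_vec_powr_sum_pos assms
      by (auto simp: sharma_mittal_def k_def e_def sum_negf algebra_simps)
  qed
qed

lemma sharma_mittal_supermodular_alpha_eq_1:
  assumes "\<beta> \<le> 1" and p: "prob_vec n p" and q: "prob_vec n q"
  shows "sharma_mittal 1 \<beta> n p + sharma_mittal 1 \<beta> n q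
    \<le> sharma_mittal 1 \<beta> n (pmeet n p q) + sharma_mittal 1 \<beta> n (pjoin n p q)"
proof (cases "\<beta> = 1")
  case True
  have "supporting_lines UNIV UNIV (\<lambda>s. - s) (\<lambda>_. - 1)"
    by (simp add: supporting_lines_def)
  then show ?thesis
    by (rule supermodular_antimono_convex_comp[OF supporting_lines_x_ln_x _ is_interval_univ
          _ _ p q])
      (simp_all add: sharma_mittal_def shannon_def True)
next
  case False
  define c where "c = 1 - \<beta>"
  have "0 < c" using assms False by (simp add: c_def)
  have g: "supporting_lines UNIV UNIV (\<lambda>s. 1 / c * exp (- c * s) + - (1 / c))
      (\<lambda>t. 1 / c * (- c * exp (- c * t)))"
    using \<open>0 < c\<close> by (intro supporting_lines_add_const supporting_lines_cmult
        supporting_lines_scale[OF supporting_lines_exp]) auto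
  show ?thesis
  proof (rule supermodular_antimono_convex_comp[OF supporting_lines_x_ln_x g is_interval_univ
        _ _ p q])
    show "\<And>t. t \<in> UNIV \<Longrightarrow> 1 / c * (- c * exp (- c * t)) \<le> 0"
      using \<open>0 < c\<close> by simp
    show "\<And>x. prob_vec n x \<Longrightarrow> (\<Sum>i<n. x i * ln (x i)) \<in> UNIV \<and>
        sharma_mittal 1 \<beta> n x = 1 / c * exp (- c * (\<Sum>i<n. x i * ln (x i))) + - (1 / c)"
      using False by (simp add: sharma_mittal_def shannon_def c_def algebra_simps)
  qed
qed

theorem theorem2:
  fixes n :: nat and \<alpha> \<beta> :: real and p q :: "nat \<Rightarrow> real"
  assumes "\<alpha> > 0" and "\<beta> \<le> \<alpha>"
    and "prob_vec n p" and "prob_vec n q"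
  shows "sharma_mittal \<alpha> \<beta> n p + sharma_mittal \<alpha> \<beta> n q
         \<le> sharma_mittal \<alpha> \<beta> n (pmeet n p q) + sharma_mittal \<alpha> \<beta> n (pjoin n p q)"
proof -
  consider "1 < \<alpha>" | "\<alpha> < 1" | "\<alpha> = 1" by linarith
  then show ?thesis
  proof cases
    case 1
    then show ?thesis using assms(2-4) by (rule sharma_mittal_supermodular_alpha_gt_1)
  next
    case 2
    with assms show ?thesis by (intro sharma_mittal_supermodular_alpha_lt_1)
  next
    case 3
    with assms show ?thesis using sharma_mittal_supermodular_alpha_eq_1[of \<beta> n p q] by simp
  qed
qed

end
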